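(* Let $L=\mathbb{Z}\times\mathbb{Z}$ with the product $$(p,q)\cdot(p',q')=\Bigl(p+p',\ q+q'+\binom{p}{2}\binom{p'}{2}\Bigr).$$ Then $L$ is a commutative loop which is torsion-free nilpotent of class $4$, with $$D_2L=D_3L=D_4L=\{(0,q)\mid q\in\mathbb{Z}\},$$ while $\mathrm{LMlt}(L)$ is nilpotent of class $3$.
   Context: Here $\binom{p}{2}=p(p-1)/2$ for $p\in\mathbb{Z}$. A loop is a set with a product and two-sided identity in which all left multiplications $x\mapsto ax$ and right multiplications $x\mapsto xa$ are bijective. $\mathrm{LMlt}(L)$ is the group of permutations of $L$ generated by the left multiplications $L_a\colon x\mapsto ax$. The loop algebra $\mathbb{Q}L$ has basis $L$ with bilinearly extended product; $I$ is the kernel of the linear map $\mathbb{Q}L\to\mathbb{Q}$ sending each element of $L$ to $1$; $I^k$ is the ideal spanned by all products (any bracketing) of at least $k$ elements of $I$; $D_kL=\{g\in L\mid g-1\in I^k\}$. $L$ is torsion-free nilpotent of class $n$ if $D_{n+1}L$ is trivial and $D_nL$ is not. A group $G$ is nilpotent of class $c$ if $\gamma_{c+1}G=1\neq\gamma_cG$, where $\gamma_1G=G$, $\gamma_{k+1}G=[G,\gamma_kG]$. *)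

theory Defs
  imports Main "HOL-Algebra.Algebra"
begin

definition is_loop :: "('a \<Rightarrow> 'a \<Rightarrow> 'a) \<Rightarrow> 'a \<Rightarrow> bool" where
  "is_loop mul e \<longleftrightarrow> (\<forall>x. mul e x = x \<and> mul x e = x)
     \<and> (\<forall>a. bij (\<lambda>x. mul a x) \<and> bij (\<lambda>x. mul x a))"

definition supp :: "('a \<Rightarrow> rat) \<Rightarrow> 'a set" where
  "supp u = {x. u x \<noteq> 0}"

definition QL :: "('a \<Rightarrow> rat) set" where
  "QL = {u. finite (supp u)}"

definition conv :: "('a \<Rightarrow> 'a \<Rightarrow> 'a) \<Rightarrow> ('a \<Rightarrow> rat) \<Rightarrow> ('a \<Rightarrow> rat) \<Rightarrow> ('a \<Rightarrow> rat)" where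
  "conv mul u v = (\<lambda>z. \<Sum>x\<in>supp u. \<Sum>y\<in>supp v. if mul x y = z then u x * v y else 0)"

definition aug :: "('a \<Rightarrow> rat) \<Rightarrow> rat" where
  "aug u = (\<Sum>x\<in>supp u. u x)"

definition aug_ideal :: "('a \<Rightarrow> rat) set" where
  "aug_ideal = {u \<in> QL. aug u = 0}"

inductive prodI :: "('a \<Rightarrow> 'a \<Rightarrow> 'a) \<Rightarrow> nat \<Rightarrow> ('a \<Rightarrow> rat) \<Rightarrow> bool"
  for mul where
  base: "u \<in> aug_ideal \<Longrightarrow> prodI mul 1 u"
| prod: "prodI mul m u \<Longrightarrow> prodI mul n v \<Longrightarrow> prodI mul (m + n) (conv mul u v)"

text \<open>I^k: the ideal of QL spanned by all products of at least k elements of I.\<close>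
inductive powI :: "('a \<Rightarrow> 'a \<Rightarrow> 'a) \<Rightarrow> nat \<Rightarrow> ('a \<Rightarrow> rat) \<Rightarrow> bool"
  for mul k where
  gen: "prodI mul m u \<Longrightarrow> k \<le> m \<Longrightarrow> powI mul k u"
| zero: "powI mul k (\<lambda>z. 0)"
| add: "powI mul k u \<Longrightarrow> powI mul k v \<Longrightarrow> powI mul k (\<lambda>z. u z + v z)"
| smult: "powI mul k u \<Longrightarrow> powI mul k (\<lambda>z. c * u z)"
| lmult: "a \<in> QL \<Longrightarrow> powI mul k u \<Longrightarrow> powI mul k (conv mul a u)"
| rmult: "a \<in> QL \<Longrightarrow> powI mul k u \<Longrightarrow> powI mul k (conv mul u a)"

definition basis_elt :: "'a \<Rightarrow> ('a \<Rightarrow> rat)" where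
  "basis_elt g = (\<lambda>z. if z = g then 1 else 0)"

definition Dk :: "('a \<Rightarrow> 'a \<Rightarrow> 'a) \<Rightarrow> 'a \<Rightarrow> nat \<Rightarrow> 'a set" where
  "Dk mul e k = {g. powI mul k (\<lambda>z. basis_elt g z - basis_elt e z)}"

definition tf_nilpotent_class :: "('a \<Rightarrow> 'a \<Rightarrow> 'a) \<Rightarrow> 'a \<Rightarrow> nat \<Rightarrow> bool" where
  "tf_nilpotent_class mul e n \<longleftrightarrow> Dk mul e (Suc n) = {e} \<and> Dk mul e n \<noteq> {e}"

definition LMlt :: "('a \<Rightarrow> 'a \<Rightarrow> 'a) \<Rightarrow> ('a \<Rightarrow> 'a) monoid" where
  "LMlt mul = (BijGroup UNIV)\<lparr>carrier :=
      generate (BijGroup UNIV) ((\<lambda>a. (\<lambda>x. mul a x)) ` UNIV)\<rparr>"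

text \<open>Lower central series: gamma G 1 = G, gamma G (k+1) = [G, gamma G k]
  (gamma G 0 is also set to G, it plays no role).\<close>
fun gamma :: "('g, 'b) monoid_scheme \<Rightarrow> nat \<Rightarrow> 'g set" where
  "gamma G 0 = carrier G"
| "gamma G (Suc 0) = carrier G"
| "gamma G (Suc (Suc k)) = generate G
     {inv\<^bsub>G\<^esub> x \<otimes>\<^bsub>G\<^esub> inv\<^bsub>G\<^esub> y \<otimes>\<^bsub>G\<^esub> x \<otimes>\<^bsub>G\<^esub> y | x y. x \<in> carrier G \<and> y \<in> gamma G (Suc k)}"

definition group_nilpotent_class :: "('g, 'b) monoid_scheme \<Rightarrow> nat \<Rightarrow> bool" where
  "group_nilpotent_class G c \<longleftrightarrow> gamma G (Suc c) = {\<one>\<^bsub>G\<^esub>} \<and> gamma G c \<noteq> {\<one>\<^bsub>G\<^esub>}"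

definition binom2 :: "int \<Rightarrow> int" where
  "binom2 p = p * (p - 1) div 2"

definition mulL :: "int \<times> int \<Rightarrow> int \<times> int \<Rightarrow> int \<times> int" where
  "mulL a b = (fst a + fst b, snd a + snd b + binom2 (fst a) * binom2 (fst b))"

end

theory Submission
  imports Defs
begin

(* The functions 1, p, binom2 p and q on L satisfy twisted Leibniz rules
   F (x y) = F x + F y + G x * G y with G = 0, p and binom2 p respectively (for 1 the rule is
   multiplicativity). Hence their linear extensions to QL vanish on I, I^2, I^3 and I^5 respectively,
   so D_2 L lies in the centre {(0, q)} and D_5 L is trivial. Conversely, for x = (1, 0) the two
   bracketings ((x - 1)^2 (x - 1)) (x - 1) and (x - 1)^2 (x - 1)^2 of the fourth power differ by
   (4, 0) - (4, 1), since (2, 0) (2, 0) = (4, 1); translating by (-4, -60) puts (0, 1) - 1 into I^4,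
   and multiplying by (0, q) and telescoping gives (0, q) - 1 in I^4 for all q.
   The group LMlt(L) consists of maps Phi s a b c : (p, q) \<mapsto> (p + s, q + a binom2 p + b p + c).
   Commutators have s = a = 0, commutators with those also have b = 0, and these are central. *)

lemma two_binom2: "2 * binom2 p = p * (p - 1)"
  unfolding binom2_def by simp

lemma binom2_0 [simp]: "binom2 0 = 0"
  by (simp add: binom2_def)

lemma binom2_add: "binom2 (p + p') = binom2 p + binom2 p' + p * p'"
proof -
  have "2 * binom2 (p + p') = 2 * (binom2 p + binom2 p' + p * p')"
    unfolding distrib_left two_binom2 by (simp add: algebra_simps)
  then show ?thesis by simp
qed

lemma binom2_uminus: "binom2 (- p) = binom2 p + p"
proof -
  have "2 * binom2 (- p) = 2 * (binom2 p + p)"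
    unfolding distrib_left two_binom2 by (simp add: algebra_simps)
  then show ?thesis by simp
qed

definition linext :: "('a \<Rightarrow> rat) \<Rightarrow> ('a \<Rightarrow> rat) \<Rightarrow> rat" where
  "linext F w = (\<Sum>z\<in>supp w. w z * F z)"

lemma linext_superset:
  assumes "finite A" "supp w \<subseteq> A"
  shows "linext F w = (\<Sum>z\<in>A. w z * F z)"
  unfolding linext_def using assms by (intro sum.mono_neutral_left) (auto simp: supp_def)

lemma aug_eq_linext: "aug u = linext (\<lambda>_. 1) u"
  by (simp add: aug_def linext_def)

lemma linext_zero [simp]: "linext (\<lambda>_. 0) w = 0"
  by (simp add: linext_def)

lemma linext_add:
  assumes "finite (supp u)" "finite (supp v)"
  shows "linext F (\<lambda>z. u z + v z) = linext F u + linext F v"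
proof -
  have fin: "finite (supp u \<union> supp v)" using assms by simp
  have "supp (\<lambda>z. u z + v z) \<subseteq> supp u \<union> supp v" by (auto simp: supp_def)
  then show ?thesis
    using fin by (simp add: linext_superset[of "supp u \<union> supp v"] sum.distrib algebra_simps)
qed

lemma linext_smult:
  assumes "finite (supp u)"
  shows "linext F (\<lambda>z. c * u z) = c * linext F u"
proof -
  have "supp (\<lambda>z. c * u z) \<subseteq> supp u" by (auto simp: supp_def)
  then show ?thesis
    using assms by (simp add: linext_superset[of "supp u"] sum_distrib_left algebra_simps)
qed

lemma linext_basis_diff: "linext F (\<lambda>z. basis_elt g z - basis_elt e z) = F g - F e"
proof (cases "g = e")
  case False
  have "supp (\<lambda>z. basis_elt g z - basis_elt e z) \<subseteq> {g, e}"
    by (auto simp: supp_def basis_elt_def)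
  then show ?thesis
    using False by (simp add: linext_superset[of "{g, e}"] basis_elt_def)
qed (simp add: linext_def)

lemma supp_conv_subset: "supp (conv mul u v) \<subseteq> (\<lambda>(x, y). mul x y) ` (supp u \<times> supp v)"
proof
  fix z assume z: "z \<in> supp (conv mul u v)"
  show "z \<in> (\<lambda>(x, y). mul x y) ` (supp u \<times> supp v)"
  proof (rule ccontr)
    assume "z \<notin> (\<lambda>(x, y). mul x y) ` (supp u \<times> supp v)"
    then have "conv mul u v z = 0"
      unfolding conv_def by (intro sum.neutral ballI) force
    with z show False by (simp add: supp_def)
  qed
qed

lemma finite_supp_conv:
  "finite (supp u) \<Longrightarrow> finite (supp v) \<Longrightarrow> finite (supp (conv mul u v))"
  using supp_conv_subset by (metis finite_SigmaI finite_imageI finite_subset)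

lemma linext_conv:
  assumes u: "finite (supp u)" and v: "finite (supp v)"
  shows "linext F (conv mul u v) = (\<Sum>x\<in>supp u. \<Sum>y\<in>supp v. u x * v y * F (mul x y))"
proof -
  let ?S = "(\<lambda>(x, y). mul x y) ` (supp u \<times> supp v)"
  have fin: "finite ?S" using u v by simp
  have "linext F (conv mul u v) = (\<Sum>z\<in>?S. conv mul u v z * F z)"
    by (rule linext_superset[OF fin supp_conv_subset])
  also have "\<dots> = (\<Sum>z\<in>?S. \<Sum>x\<in>supp u. \<Sum>y\<in>supp v. if mul x y = z then u x * v y * F z else 0)"
    unfolding conv_def sum_distrib_right by (intro sum.cong refl) auto
  also have "\<dots> = (\<Sum>x\<in>supp u. \<Sum>y\<in>supp v. \<Sum>z\<in>?S. if mul x y = z then u x * v y * F z else 0)"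
    by (subst sum.swap) (simp add: sum.swap[of _ ?S])
  also have "\<dots> = (\<Sum>x\<in>supp u. \<Sum>y\<in>supp v. u x * v y * F (mul x y))"
    using fin by (intro sum.cong refl) (auto simp: sum.delta')
  finally show ?thesis .
qed

lemma aug_conv:
  assumes "finite (supp u)" "finite (supp v)"
  shows "aug (conv mul u v) = aug u * aug v"
  unfolding aug_eq_linext linext_conv[OF assms] by (simp add: linext_def sum_product)

lemma linext_conv_twisted:
  assumes "finite (supp u)" "finite (supp v)"
    and twisted_Leibniz: "\<And>x y. F (mul x y) = F x + F y + G x * G y"
  shows "linext F (conv mul u v) = linext F u * aug v + aug u * linext F v + linext G u * linext G v"
proof -
  have "u x * v y * F (mul x y) = u x * F x * v y + u x * (v y * F y) + u x * G x * (v y * G y)" for x y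
    unfolding twisted_Leibniz by (simp add: algebra_simps)
  then show ?thesis
    unfolding linext_conv[OF assms(1,2)] by (simp add: linext_def aug_def sum_product sum.distrib)
qed

definition lincomb :: "('a \<times> rat) list \<Rightarrow> 'a \<Rightarrow> rat" where
  "lincomb xs z = (\<Sum>(g, c)\<leftarrow>xs. if g = z then c else 0)"

lemma lincomb_Nil [simp]: "lincomb [] z = 0"
  by (simp add: lincomb_def)

lemma lincomb_Cons [simp]: "lincomb ((g, c) # xs) z = (if g = z then c else 0) + lincomb xs z"
  by (simp add: lincomb_def)

lemma lincomb_append [simp]: "lincomb (xs @ ys) z = lincomb xs z + lincomb ys z"
  by (simp add: lincomb_def)

lemma lincomb_outside: "z \<notin> fst ` set xs \<Longrightarrow> lincomb xs z = 0"
proof (induction xs)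
  case (Cons p xs)
  then show ?case by (cases p) auto
qed simp

lemma supp_lincomb_subset: "supp (lincomb xs) \<subseteq> fst ` set xs"
  unfolding supp_def using lincomb_outside by (metis (mono_tags) mem_Collect_eq subsetI)

lemma lincomb_in_QL: "lincomb xs \<in> QL"
proof -
  have "finite (supp (lincomb xs))"
    by (rule finite_subset[OF supp_lincomb_subset]) simp
  then show ?thesis by (simp add: QL_def)
qed

lemma basis_elt_eq_lincomb: "basis_elt g = lincomb [(g, 1)]"
  by (rule ext) (simp add: basis_elt_def)

lemma lincomb_eqI:
  assumes "list_all (\<lambda>z. lincomb xs z = lincomb ys z) (map fst xs @ map fst ys)"
  shows "lincomb xs = lincomb ys"
proof
  fix z
  show "lincomb xs z = lincomb ys z"
  proof (cases "z \<in> fst ` set xs \<union> fst ` set ys")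
    case False
    then show ?thesis by (simp add: lincomb_outside)
  qed (use assms in \<open>auto simp: list_all_iff\<close>)
qed

lemma sum_lincomb_mult:
  assumes "finite A" "fst ` set xs \<subseteq> A"
  shows "(\<Sum>x\<in>A. lincomb xs x * G x) = (\<Sum>(g, c)\<leftarrow>xs. c * G g)"
  using assms(2)
proof (induction xs)
  case (Cons p xs)
  obtain g c where p: "p = (g, c)" by force
  have "(\<Sum>x\<in>A. lincomb (p # xs) x * G x) = (\<Sum>x\<in>A. if g = x then c * G x else 0) + (\<Sum>x\<in>A. lincomb xs x * G x)"
    unfolding sum.distrib[symmetric] by (intro sum.cong) (auto simp: p algebra_simps)
  also have "\<dots> = c * G g + (\<Sum>(g, c)\<leftarrow>xs. c * G g)"
    using Cons assms(1) p by (simp add: sum.delta)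
  finally show ?case by (simp add: p)
qed simp

lemma conv_superset:
  assumes A: "finite A" "supp u \<subseteq> A" and B: "finite B" "supp v \<subseteq> B"
  shows "conv mul u v z = (\<Sum>x\<in>A. \<Sum>y\<in>B. if mul x y = z then u x * v y else 0)"
proof -
  let ?h = "\<lambda>x y. if mul x y = z then u x * v y else 0"
  have outside: "?h x y = 0" if "x \<notin> supp u \<or> y \<notin> supp v" for x y
    using that by (auto simp: supp_def)
  have "(\<Sum>y\<in>supp v. ?h x y) = (\<Sum>y\<in>B. ?h x y)" for x
    using B outside by (intro sum.mono_neutral_left) auto
  moreover have "(\<Sum>x\<in>supp u. \<Sum>y\<in>B. ?h x y) = (\<Sum>x\<in>A. \<Sum>y\<in>B. ?h x y)"
    using A outside by (intro sum.mono_neutral_left) auto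
  ultimately show ?thesis unfolding conv_def by simp
qed

lemma conv_lincomb:
  "conv mul (lincomb xs) (lincomb ys) = lincomb (concat (map (\<lambda>(g, c). map (\<lambda>(h, d). (mul g h, c * d)) ys) xs))"
proof
  fix z
  let ?A = "fst ` set xs" and ?B = "fst ` set ys"
  let ?\<delta> = "\<lambda>x y. if mul x y = z then 1 else (0::rat)"
  have "conv mul (lincomb xs) (lincomb ys) z
      = (\<Sum>x\<in>?A. \<Sum>y\<in>?B. if mul x y = z then lincomb xs x * lincomb ys y else 0)"
    by (intro conv_superset supp_lincomb_subset finite_imageI finite_set)
  also have "\<dots> = (\<Sum>x\<in>?A. lincomb xs x * (\<Sum>y\<in>?B. lincomb ys y * ?\<delta> x y))"
    by (auto simp: sum_distrib_left intro!: sum.cong)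
  also have "\<dots> = (\<Sum>(g, c)\<leftarrow>xs. c * (\<Sum>(h, d)\<leftarrow>ys. d * ?\<delta> g h))"
    by (simp only: sum_lincomb_mult[OF finite_imageI[OF finite_set] subset_refl])
  also have "\<dots> = lincomb (concat (map (\<lambda>(g, c). map (\<lambda>(h, d). (mul g h, c * d)) ys) xs)) z"
  proof -
    have "lincomb (map (\<lambda>(h, d). (mul g h, c * d)) ys) z = c * (\<Sum>(h, d)\<leftarrow>ys. d * ?\<delta> g h)" for g c
      by (induction ys) (auto simp: algebra_simps)
    then show ?thesis by (induction xs) auto
  qed
  finally show "conv mul (lincomb xs) (lincomb ys) z = \<dots>" .
qed

lemma linext_lincomb: "linext F (lincomb xs) = (\<Sum>(g, c)\<leftarrow>xs. c * F g)"
  by (simp add: linext_superset[OF _ supp_lincomb_subset] sum_lincomb_mult)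

lemma basis_diff_eq_lincomb: "(\<lambda>z. basis_elt g z - basis_elt h z) = lincomb [(g, 1), (h, -1)]"
  by (rule ext) (simp add: basis_elt_def)

section \<open>Functionals vanishing on powers of the augmentation ideal\<close>

lemma powI_antimono: "powI mul k u \<Longrightarrow> j \<le> k \<Longrightarrow> powI mul j u"
  by (induction rule: powI.induct) (auto intro: powI.intros)

lemma Dk_antimono: "j \<le> k \<Longrightarrow> Dk mul e k \<subseteq> Dk mul e j"
  unfolding Dk_def using powI_antimono by blast

definition pF :: "int \<times> int \<Rightarrow> rat" where
  "pF g = of_int (fst g)"

definition cF :: "int \<times> int \<Rightarrow> rat" where
  "cF g = of_int (binom2 (fst g))"

definition qF :: "int \<times> int \<Rightarrow> rat" where
  "qF g = of_int (snd g)"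

lemma linext_conv_mulL:
  assumes "finite (supp u)" "finite (supp v)"
  shows "aug (conv mulL u v) = aug u * aug v"
    and "linext pF (conv mulL u v) = linext pF u * aug v + aug u * linext pF v"
    and "linext cF (conv mulL u v) = linext cF u * aug v + aug u * linext cF v + linext pF u * linext pF v"
    and "linext qF (conv mulL u v) = linext qF u * aug v + aug u * linext qF v + linext cF u * linext cF v"
  using aug_conv[OF assms]
    linext_conv_twisted[OF assms, where G = "\<lambda>_. 0" and F = pF]
    linext_conv_twisted[OF assms, where G = pF and F = cF]
    linext_conv_twisted[OF assms, where G = cF and F = qF]
  by (simp_all add: pF_def cF_def qF_def mulL_def binom2_add)

definition annihilated :: "nat \<Rightarrow> (int \<times> int \<Rightarrow> rat) \<Rightarrow> bool" where
  "annihilated k w \<longleftrightarrow> finite (supp w) \<and> (1 \<le> k \<longrightarrow> aug w = 0) \<and> (2 \<le> k \<longrightarrow> linext pF w = 0)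
     \<and> (3 \<le> k \<longrightarrow> linext cF w = 0) \<and> (5 \<le> k \<longrightarrow> linext qF w = 0)"

lemma annihilated_conv_QL:
  assumes "annihilated k u" "a \<in> QL"
  shows "annihilated k (conv mulL a u)" and "annihilated k (conv mulL u a)"
  using assms finite_supp_conv linext_conv_mulL[of a u] linext_conv_mulL[of u a]
  by (auto simp: annihilated_def QL_def)

lemma prodI_annihilated: "prodI mulL m u \<Longrightarrow> 1 \<le> m \<and> annihilated m u"
proof (induction rule: prodI.induct)
  case (base u)
  then show ?case by (simp add: annihilated_def aug_ideal_def QL_def)
next
  case (prod m u n v)
  then have "finite (supp u)" "finite (supp v)" "aug u = 0" "aug v = 0"
    by (auto simp: annihilated_def)
  moreover have "linext pF u = 0 \<or> linext pF v = 0" if "3 \<le> m + n"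
    using prod that by (auto simp: annihilated_def)
  moreover have "linext cF u = 0 \<or> linext cF v = 0" if "5 \<le> m + n"
    using prod that by (auto simp: annihilated_def)
  ultimately show ?case
    using prod.IH finite_supp_conv linext_conv_mulL by (auto simp: annihilated_def)
qed

lemma powI_annihilated: "powI mulL k w \<Longrightarrow> annihilated k w"
proof (induction rule: powI.induct)
  case (gen m u)
  then show ?case using prodI_annihilated[OF gen(1)] by (auto simp: annihilated_def)
next
  case zero
  then show ?case by (simp add: annihilated_def linext_def aug_def supp_def)
next
  case (add u v)
  have "supp (\<lambda>z. u z + v z) \<subseteq> supp u \<union> supp v" by (auto simp: supp_def)
  then show ?case
    using add linext_add[of u v] finite_subset by (auto simp: annihilated_def aug_eq_linext)
next
  case (smult u c)
  have "supp (\<lambda>z. c * u z) \<subseteq> supp u" by (auto simp: supp_def)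
  then show ?case
    using smult linext_smult[of u] finite_subset by (auto simp: annihilated_def aug_eq_linext)
qed (use annihilated_conv_QL in blast)+

lemma Dk_annihilated: "g \<in> Dk mulL (0, 0) k \<Longrightarrow> annihilated k (\<lambda>z. basis_elt g z - basis_elt (0, 0) z)"
  unfolding Dk_def by (simp add: powI_annihilated)

lemma Dk2_subset_center: "Dk mulL (0, 0) 2 \<subseteq> {(0, q) | q. True}"
proof
  fix g assume "g \<in> Dk mulL (0, 0) 2"
  then have "pF g - pF (0, 0) = 0"
    using Dk_annihilated unfolding annihilated_def linext_basis_diff by simp
  then show "g \<in> {(0, q) | q. True}" by (cases g) (simp add: pF_def)
qed

lemma Dk5_subset_unit: "Dk mulL (0, 0) 5 \<subseteq> {(0, 0)}"
proof
  fix g assume "g \<in> Dk mulL (0, 0) 5"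
  then have "pF g - pF (0, 0) = 0" "qF g - qF (0, 0) = 0"
    using Dk_annihilated unfolding annihilated_def linext_basis_diff by simp_all
  then show "g \<in> {(0, 0)}" by (cases g) (simp add: pF_def qF_def)
qed

section \<open>The centre lies in the fourth dimension subloop\<close>

lemma x_minus_1_in_aug_ideal: "lincomb [((1::int, 0::int), 1), ((0, 0), -1)] \<in> aug_ideal"
  by (simp add: aug_ideal_def aug_eq_linext linext_lincomb lincomb_in_QL)

lemma mulL_lincomb_square:
  "conv mulL (lincomb [((1, 0), 1), ((0, 0), -1)]) (lincomb [((1, 0), 1), ((0, 0), -1)])
     = lincomb [((2, 0), 1), ((1, 0), -2), ((0, 0), 1)]"
  unfolding conv_lincomb by (rule lincomb_eqI) (simp add: mulL_def binom2_def)

lemma mulL_lincomb_cube: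
  "conv mulL (lincomb [((2, 0), 1), ((1, 0), -2), ((0, 0), 1)]) (lincomb [((1, 0), 1), ((0, 0), -1)])
     = lincomb [((3, 0), 1), ((2, 0), -3), ((1, 0), 3), ((0, 0), -1)]"
  unfolding conv_lincomb by (rule lincomb_eqI) (simp add: mulL_def binom2_def)

lemma mulL_lincomb_fourth_power:
  "conv mulL (lincomb [((3, 0), 1), ((2, 0), -3), ((1, 0), 3), ((0, 0), -1)]) (lincomb [((1, 0), 1), ((0, 0), -1)])
     = lincomb [((4, 0), 1), ((3, 0), -4), ((2, 0), 6), ((1, 0), -4), ((0, 0), 1)]"
  unfolding conv_lincomb by (rule lincomb_eqI) (simp add: mulL_def binom2_def)

lemma mulL_lincomb_square_of_square:
  "conv mulL (lincomb [((2, 0), 1), ((1, 0), -2), ((0, 0), 1)]) (lincomb [((2, 0), 1), ((1, 0), -2), ((0, 0), 1)])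
     = lincomb [((4, 1), 1), ((3, 0), -4), ((2, 0), 6), ((1, 0), -4), ((0, 0), 1)]"
  unfolding conv_lincomb by (rule lincomb_eqI) (simp add: mulL_def binom2_def)

lemma mulL_lincomb_translate:
  "conv mulL (lincomb [((-4, -60), 1)]) (lincomb [((4, 0), 1), ((4, 1), -1)])
     = lincomb [((0, 0), 1), ((0, 1), -1)]"
  unfolding conv_lincomb by (rule lincomb_eqI) (simp add: mulL_def binom2_def)

lemma center_generator_in_powI4: "powI mulL 4 (\<lambda>z. basis_elt (0, 1) z - basis_elt (0, 0) z)"
proof -
  let ?u = "lincomb [((1, 0), 1), ((0, 0), -1)]"
  have u: "prodI mulL 1 ?u"
    by (rule prodI.base[OF x_minus_1_in_aug_ideal])
  have "prodI mulL 4 (conv mulL (conv mulL (conv mulL ?u ?u) ?u) ?u)"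
    using prodI.prod[OF prodI.prod[OF prodI.prod[OF u u] u] u] by (simp add: eval_nat_numeral)
  then have left_normed: "prodI mulL 4 (lincomb [((4, 0), 1), ((3, 0), -4), ((2, 0), 6), ((1, 0), -4), ((0, 0), 1)])"
    unfolding mulL_lincomb_square mulL_lincomb_cube mulL_lincomb_fourth_power .
  have "prodI mulL 4 (conv mulL (conv mulL ?u ?u) (conv mulL ?u ?u))"
    using prodI.prod[OF prodI.prod[OF u u] prodI.prod[OF u u]] by (simp add: eval_nat_numeral)
  then have balanced: "prodI mulL 4 (lincomb [((4, 1), 1), ((3, 0), -4), ((2, 0), 6), ((1, 0), -4), ((0, 0), 1)])"
    unfolding mulL_lincomb_square mulL_lincomb_square_of_square .
  have "powI mulL 4 (\<lambda>z. lincomb [((4, 0), 1), ((3, 0), -4), ((2, 0), 6), ((1, 0), -4), ((0, 0), 1)] z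
      + (-1) * lincomb [((4, 1), 1), ((3, 0), -4), ((2, 0), 6), ((1, 0), -4), ((0, 0), 1)] z)"
    by (intro powI.add powI.smult powI.gen[OF left_normed] powI.gen[OF balanced]) simp_all
  moreover have "(\<lambda>z. lincomb [((4::int, 0::int), 1), ((3, 0), -4), ((2, 0), 6), ((1, 0), -4), ((0, 0), 1)] z
      + (-1) * lincomb [((4, 1), 1), ((3, 0), -4), ((2, 0), 6), ((1, 0), -4), ((0, 0), 1)] z)
      = lincomb [((4, 0), 1), ((4, 1), -1)]"
    by (rule ext) simp
  ultimately have "powI mulL 4 (conv mulL (lincomb [((-4, -60), 1)]) (lincomb [((4, 0), 1), ((4, 1), -1)]))"
    by (intro powI.lmult lincomb_in_QL) simp
  then have "powI mulL 4 (\<lambda>z. (-1) * lincomb [((0, 0), 1), ((0, 1), -1)] z)"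
    unfolding mulL_lincomb_translate by (rule powI.smult)
  moreover have "(\<lambda>z. (-1) * lincomb [((0::int, 0::int), 1), ((0, 1), -1)] z) = (\<lambda>z. basis_elt (0, 1) z - basis_elt (0, 0) z)"
    by (rule ext) (simp add: basis_elt_def)
  ultimately show ?thesis by simp
qed

lemma conv_basis_center_diff:
  "conv mulL (basis_elt (0, q)) (\<lambda>z. basis_elt (0, 1) z - basis_elt (0, 0) z)
     = (\<lambda>z. basis_elt (0, q + 1) z - basis_elt (0, q) z)"
  unfolding basis_diff_eq_lincomb unfolding basis_elt_eq_lincomb conv_lincomb
  by (rule lincomb_eqI) (simp add: mulL_def add.commute)

lemma center_subset_Dk4: "{(0, q) | q. True} \<subseteq> Dk mulL (0, 0) 4"
proof -
  let ?step = "\<lambda>q. conv mulL (basis_elt (0, q)) (\<lambda>z. basis_elt (0, 1) z - basis_elt (0, 0) z)"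
  have step: "powI mulL 4 (?step q)" for q
    by (intro powI.lmult center_generator_in_powI4) (simp add: basis_elt_eq_lincomb lincomb_in_QL)
  have "powI mulL 4 (\<lambda>z. basis_elt (0, q) z - basis_elt (0, 0) z)" for q
  proof (induction q rule: int_induct[where k = 0])
    case (step1 i)
    from powI.add[OF step1(2) step[of i]] show ?case
      unfolding conv_basis_center_diff by (simp add: algebra_simps)
  next
    case (step2 i)
    from powI.add[OF step2(2) powI.smult[OF step[of "i - 1"], of "-1"]] show ?case
      unfolding conv_basis_center_diff by (simp add: algebra_simps)
  qed (simp add: powI.zero)
  then show ?thesis unfolding Dk_def by blast
qed

definition commutator :: "('g, 'b) monoid_scheme \<Rightarrow> 'g \<Rightarrow> 'g \<Rightarrow> 'g" where
  "commutator G x y = inv\<^bsub>G\<^esub> x \<otimes>\<^bsub>G\<^esub> inv\<^bsub>G\<^esub> y \<otimes>\<^bsub>G\<^esub> x \<otimes>\<^bsub>G\<^esub> y"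

lemma (in group) commutator_closed [simp]:
  "x \<in> carrier G \<Longrightarrow> y \<in> carrier G \<Longrightarrow> commutator G x y \<in> carrier G"
  by (simp add: commutator_def)

lemma (in group) mult_commutator:
  "x \<in> carrier G \<Longrightarrow> y \<in> carrier G \<Longrightarrow> y \<otimes> x \<otimes> commutator G x y = x \<otimes> y"
  unfolding commutator_def by (simp add: m_assoc[symmetric]) (simp add: m_assoc)

lemma gamma_Suc:
  "0 < k \<Longrightarrow> gamma G (Suc k) = generate G {commutator G x y | x y. x \<in> carrier G \<and> y \<in> gamma G k}"
  by (cases k) (simp_all add: commutator_def)

lemma commutator_in_gamma_Suc:
  "0 < k \<Longrightarrow> x \<in> carrier G \<Longrightarrow> y \<in> gamma G k \<Longrightarrow> commutator G x y \<in> gamma G (Suc k)"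
  unfolding gamma_Suc by (blast intro: generate.incl)

lemma gamma_Suc_subset:
  assumes "group G" "subgroup K G" "0 < k"
    and "\<And>x y. x \<in> carrier G \<Longrightarrow> y \<in> gamma G k \<Longrightarrow> commutator G x y \<in> K"
  shows "gamma G (Suc k) \<subseteq> K"
  unfolding gamma_Suc[OF assms(3)] using assms(4)
  by (intro group.generate_subgroup_incl[OF assms(1) _ assms(2)]) blast

section \<open>The left multiplication group\<close>

definition Phi :: "int \<Rightarrow> int \<Rightarrow> int \<Rightarrow> int \<Rightarrow> int \<times> int \<Rightarrow> int \<times> int" where
  "Phi s a b c = (\<lambda>x. (fst x + s, snd x + a * binom2 (fst x) + b * fst x + c))"

lemma Phi_comp:
  "Phi s a b c \<circ> Phi s' a' b' c' = Phi (s + s') (a + a') (b + b' + a * s') (c + c' + a * binom2 s' + b * s')"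
  by (rule ext) (simp add: Phi_def binom2_add algebra_simps)

lemma Phi_zero: "Phi 0 0 0 0 = id"
  by (rule ext) (simp add: Phi_def)

lemma Phi_eq_Phi_iff: "Phi s a b c = Phi s' a' b' c' \<longleftrightarrow> s = s' \<and> a = a' \<and> b = b' \<and> c = c'"
proof
  assume eq: "Phi s a b c = Phi s' a' b' c'"
  have "s = s'" "c = c'" using fun_cong[OF eq, of "(0, 0)"] by (simp_all add: Phi_def)
  moreover have "b + c = b' + c'" using fun_cong[OF eq, of "(1, 0)"] by (simp add: Phi_def binom2_def)
  moreover have "a + 2 * b + c = a' + 2 * b' + c'" using fun_cong[OF eq, of "(2, 0)"] by (simp add: Phi_def binom2_def)
  ultimately show "s = s' \<and> a = a' \<and> b = b' \<and> c = c'" by simp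
qed simp

lemma Phi_eq_id_iff: "Phi s a b c = id \<longleftrightarrow> s = 0 \<and> a = 0 \<and> b = 0 \<and> c = 0"
  using Phi_eq_Phi_iff[of s a b c 0 0 0 0] by (simp add: Phi_zero)

definition Phi_inv :: "int \<Rightarrow> int \<Rightarrow> int \<Rightarrow> int \<Rightarrow> int \<times> int \<Rightarrow> int \<times> int" where
  "Phi_inv s a b c = Phi (- s) (- a) (a * s - b) (b * s - c - a * binom2 (- s))"

lemma Phi_inv_comp: "Phi_inv s a b c \<circ> Phi s a b c = id"
proof -
  have "s * s = s + binom2 s * 2"
    using two_binom2[of s] by (simp add: algebra_simps)
  then have "a * (s * s) = a * s + a * (binom2 s * 2)"
    by (metis distrib_left)
  then show ?thesis
    unfolding Phi_inv_def Phi_comp Phi_eq_id_iff by (simp add: binom2_uminus algebra_simps)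
qed

lemma Phi_comp_inv: "Phi s a b c \<circ> Phi_inv s a b c = id"
  unfolding Phi_inv_def Phi_comp Phi_eq_id_iff by (simp add: algebra_simps)

lemma Phi_in_Bij: "Phi s a b c \<in> Bij UNIV"
  using o_bij[OF Phi_inv_comp Phi_comp_inv] by (simp add: Bij_def bij_betw_def bij_def)

lemma mulL_eq_Phi: "mulL g = Phi (fst g) (binom2 (fst g)) 0 (snd g)"
  by (rule ext) (simp add: mulL_def Phi_def algebra_simps)

lemma BijGroup_mult: "f \<in> Bij UNIV \<Longrightarrow> g \<in> Bij UNIV \<Longrightarrow> f \<otimes>\<^bsub>BijGroup UNIV\<^esub> g = f \<circ> g"
  by (simp add: BijGroup_def compose_def o_def restrict_UNIV)

lemma BijGroup_one: "\<one>\<^bsub>BijGroup UNIV\<^esub> = id"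
  by (simp add: BijGroup_def id_def restrict_UNIV)

lemma BijGroup_inv_Phi: "inv\<^bsub>BijGroup UNIV\<^esub> (Phi s a b c) = Phi_inv s a b c"
proof (rule group.inv_equality[OF group_BijGroup])
  have "Phi_inv s a b c \<in> Bij UNIV" by (simp add: Phi_inv_def Phi_in_Bij)
  then show "Phi_inv s a b c \<otimes>\<^bsub>BijGroup UNIV\<^esub> Phi s a b c = \<one>\<^bsub>BijGroup UNIV\<^esub>"
    and "Phi_inv s a b c \<in> carrier (BijGroup UNIV)"
    by (simp_all add: BijGroup_mult BijGroup_one Phi_in_Bij Phi_inv_comp, simp add: BijGroup_def)
qed (simp add: BijGroup_def Phi_in_Bij)

lemma subgroup_LMlt: "subgroup (carrier (LMlt mulL)) (BijGroup UNIV)"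
proof -
  have "range mulL \<subseteq> carrier (BijGroup UNIV)"
    by (auto simp: BijGroup_def mulL_eq_Phi Phi_in_Bij)
  then show ?thesis
    unfolding LMlt_def by (simp add: group.generate_is_subgroup[OF group_BijGroup])
qed

lemma group_LMlt: "group (LMlt mulL)"
  using subgroup.subgroup_is_group[OF subgroup_LMlt group_BijGroup] by (simp add: LMlt_def)

lemma mulL_in_LMlt: "mulL g \<in> carrier (LMlt mulL)"
  by (simp add: LMlt_def generate.incl)

interpretation LMlt: group "LMlt mulL"
  by (rule group_LMlt)

lemma LMlt_carrier_Phi:
  assumes "f \<in> carrier (LMlt mulL)"
  obtains s a b c where "f = Phi s a b c"
proof -
  from assms have "f \<in> generate (BijGroup UNIV) (range mulL)"
    by (simp add: LMlt_def)
  then have "\<exists>s a b c. f = Phi s a b c"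
  proof (induction rule: generate.induct)
    case one
    show ?case using BijGroup_one Phi_zero by metis
  next
    case (incl h)
    then show ?case by (auto simp: mulL_eq_Phi)
  next
    case (inv h)
    then obtain g where "h = mulL g" by blast
    then show ?case using BijGroup_inv_Phi unfolding mulL_eq_Phi Phi_inv_def by blast
  next
    case (eng h h')
    then show ?case by (metis BijGroup_mult Phi_in_Bij Phi_comp)
  qed
  with that show thesis by blast
qed

lemma LMlt_mult:
  assumes "f \<in> carrier (LMlt mulL)" "g \<in> carrier (LMlt mulL)"
  shows "f \<otimes>\<^bsub>LMlt mulL\<^esub> g = f \<circ> g"
proof -
  have "f \<in> Bij UNIV" "g \<in> Bij UNIV"
    using assms subgroup.subset[OF subgroup_LMlt] by (auto simp: BijGroup_def)
  then show ?thesis by (simp add: LMlt_def BijGroup_mult)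
qed

lemma LMlt_one: "\<one>\<^bsub>LMlt mulL\<^esub> = id"
  by (simp add: LMlt_def BijGroup_one)

lemma LMlt_inv_Phi:
  "Phi s a b c \<in> carrier (LMlt mulL) \<Longrightarrow> inv\<^bsub>LMlt mulL\<^esub> (Phi s a b c) = Phi_inv s a b c"
  using group.m_inv_consistent[OF group_BijGroup subgroup_LMlt] BijGroup_inv_Phi
  by (simp add: LMlt_def)

lemma LMlt_commutator:
  assumes x: "Phi s a b c \<in> carrier (LMlt mulL)" and y: "Phi s' a' b' c' \<in> carrier (LMlt mulL)"
  shows "commutator (LMlt mulL) (Phi s a b c) (Phi s' a' b' c')
    = Phi 0 0 (a * s' - a' * s) (a * binom2 s' + b * s' - a' * binom2 s - b' * s)"
proof -
  have k: "commutator (LMlt mulL) (Phi s a b c) (Phi s' a' b' c') \<in> carrier (LMlt mulL)"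
    using x y by simp
  then obtain t e f g where kPhi: "commutator (LMlt mulL) (Phi s a b c) (Phi s' a' b' c') = Phi t e f g"
    by (rule LMlt_carrier_Phi)
  have "Phi s' a' b' c' \<circ> Phi s a b c \<circ> Phi t e f g
      = Phi s' a' b' c' \<otimes>\<^bsub>LMlt mulL\<^esub> Phi s a b c \<otimes>\<^bsub>LMlt mulL\<^esub> Phi t e f g"
    using k LMlt_mult[OF LMlt.m_closed[OF y x]] by (simp add: kPhi LMlt_mult[OF y x])
  also have "\<dots> = Phi s a b c \<otimes>\<^bsub>LMlt mulL\<^esub> Phi s' a' b' c'"
    using LMlt.mult_commutator[OF x y] by (simp only: kPhi)
  also have "\<dots> = Phi s a b c \<circ> Phi s' a' b' c'"
    by (rule LMlt_mult[OF x y])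
  finally have "t = 0 \<and> e = 0 \<and> f = a * s' - a' * s \<and> g = a * binom2 s' + b * s' - a' * binom2 s - b' * s"
    unfolding Phi_comp Phi_eq_Phi_iff by (auto simp: algebra_simps)
  then show ?thesis using kPhi by simp
qed

lemma subgroup_LMlt_Phi_0_0:
  assumes zero: "P 0 0"
    and add: "\<And>b c b' c'. P b c \<Longrightarrow> P b' c' \<Longrightarrow> P (b + b') (c + c')"
    and uminus: "\<And>b c. P b c \<Longrightarrow> P (- b) (- c)"
  shows "subgroup {f \<in> carrier (LMlt mulL). \<exists>b c. P b c \<and> f = Phi 0 0 b c} (LMlt mulL)"
proof (rule LMlt.subgroupI)
  show "{f \<in> carrier (LMlt mulL). \<exists>b c. P b c \<and> f = Phi 0 0 b c} \<noteq> {}"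
    using zero LMlt.one_closed by (force simp: LMlt_one Phi_zero)
next
  fix f assume "f \<in> {f \<in> carrier (LMlt mulL). \<exists>b c. P b c \<and> f = Phi 0 0 b c}"
  then obtain b c where f: "f \<in> carrier (LMlt mulL)" "P b c" "f = Phi 0 0 b c" by blast
  then have "inv\<^bsub>LMlt mulL\<^esub> f = Phi 0 0 (- b) (- c)"
    by (simp add: LMlt_inv_Phi Phi_inv_def)
  then show "inv\<^bsub>LMlt mulL\<^esub> f \<in> {f \<in> carrier (LMlt mulL). \<exists>b c. P b c \<and> f = Phi 0 0 b c}"
    using uminus[OF f(2)] LMlt.inv_closed[OF f(1)] by auto
next
  fix f g
  assume "f \<in> {f \<in> carrier (LMlt mulL). \<exists>b c. P b c \<and> f = Phi 0 0 b c}"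
    and "g \<in> {f \<in> carrier (LMlt mulL). \<exists>b c. P b c \<and> f = Phi 0 0 b c}"
  then obtain b c b' c' where f: "f \<in> carrier (LMlt mulL)" "P b c" "f = Phi 0 0 b c"
    and g: "g \<in> carrier (LMlt mulL)" "P b' c'" "g = Phi 0 0 b' c'" by blast
  then have "f \<otimes>\<^bsub>LMlt mulL\<^esub> g = Phi 0 0 (b + b') (c + c')"
    by (simp add: LMlt_mult Phi_comp)
  then show "f \<otimes>\<^bsub>LMlt mulL\<^esub> g \<in> {f \<in> carrier (LMlt mulL). \<exists>b c. P b c \<and> f = Phi 0 0 b c}"
    using add[OF f(2) g(2)] LMlt.m_closed[OF f(1) g(1)] by auto
qed auto

lemma gamma2_LMlt: "gamma (LMlt mulL) 2 \<subseteq> {f \<in> carrier (LMlt mulL). \<exists>b c. f = Phi 0 0 b c}"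
proof -
  have "gamma (LMlt mulL) (Suc 1) \<subseteq> {f \<in> carrier (LMlt mulL). \<exists>b c. f = Phi 0 0 b c}"
  proof (rule gamma_Suc_subset[OF group_LMlt subgroup_LMlt_Phi_0_0[of "\<lambda>_ _. True", simplified]])
    fix x y assume x: "x \<in> carrier (LMlt mulL)" and "y \<in> gamma (LMlt mulL) 1"
    then have y: "y \<in> carrier (LMlt mulL)" by simp
    obtain s a b c where "x = Phi s a b c" using LMlt_carrier_Phi[OF x] .
    moreover obtain s' a' b' c' where "y = Phi s' a' b' c'" using LMlt_carrier_Phi[OF y] .
    ultimately show "commutator (LMlt mulL) x y \<in> {f \<in> carrier (LMlt mulL). \<exists>b c. f = Phi 0 0 b c}"
      using LMlt.commutator_closed[OF x y] x y LMlt_commutator by auto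
  qed simp
  then show ?thesis by (simp add: numeral_2_eq_2)
qed

lemma gamma3_LMlt: "gamma (LMlt mulL) 3 \<subseteq> {f \<in> carrier (LMlt mulL). \<exists>c. f = Phi 0 0 0 c}"
proof -
  have "gamma (LMlt mulL) (Suc 2) \<subseteq> {f \<in> carrier (LMlt mulL). \<exists>c. f = Phi 0 0 0 c}"
  proof (rule gamma_Suc_subset[OF group_LMlt subgroup_LMlt_Phi_0_0[of "\<lambda>b _. b = 0", simplified]])
    fix x y assume x: "x \<in> carrier (LMlt mulL)" and "y \<in> gamma (LMlt mulL) 2"
    then obtain b' c' where y: "y \<in> carrier (LMlt mulL)" "y = Phi 0 0 b' c'"
      using gamma2_LMlt by blast
    obtain s a b c where "x = Phi s a b c" using LMlt_carrier_Phi[OF x] .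
    then show "commutator (LMlt mulL) x y \<in> {f \<in> carrier (LMlt mulL). \<exists>c. f = Phi 0 0 0 c}"
      using LMlt.commutator_closed[OF x y(1)] x y LMlt_commutator by auto
  qed simp
  then show ?thesis by (simp add: numeral_3_eq_3)
qed

lemma gamma4_LMlt: "gamma (LMlt mulL) 4 = {\<one>\<^bsub>LMlt mulL\<^esub>}"
proof
  have "gamma (LMlt mulL) (Suc 3) \<subseteq> {\<one>\<^bsub>LMlt mulL\<^esub>}"
  proof (rule gamma_Suc_subset[OF group_LMlt LMlt.triv_subgroup])
    fix x y assume x: "x \<in> carrier (LMlt mulL)" and "y \<in> gamma (LMlt mulL) 3"
    then obtain c' where y: "y \<in> carrier (LMlt mulL)" "y = Phi 0 0 0 c'"
      using gamma3_LMlt by blast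
    obtain s a b c where "x = Phi s a b c" using LMlt_carrier_Phi[OF x] .
    then show "commutator (LMlt mulL) x y \<in> {\<one>\<^bsub>LMlt mulL\<^esub>}"
      using x y LMlt_commutator by (simp add: LMlt_one Phi_zero)
  qed simp
  then show "gamma (LMlt mulL) 4 \<subseteq> {\<one>\<^bsub>LMlt mulL\<^esub>}" by (simp add: numeral_eq_Suc)
  show "{\<one>\<^bsub>LMlt mulL\<^esub>} \<subseteq> gamma (LMlt mulL) 4"
    by (simp add: gamma_Suc[of 3, simplified] generate.one)
qed

lemma gamma3_LMlt_nontrivial: "gamma (LMlt mulL) 3 \<noteq> {\<one>\<^bsub>LMlt mulL\<^esub>}"
proof -
  have x1: "Phi 1 0 0 0 \<in> carrier (LMlt mulL)" and x2: "Phi 2 1 0 0 \<in> carrier (LMlt mulL)"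
    using mulL_in_LMlt[of "(1, 0)"] mulL_in_LMlt[of "(2, 0)"] by (simp_all add: mulL_eq_Phi binom2_def)
  have "commutator (LMlt mulL) (Phi 2 1 0 0) (Phi 1 0 0 0) \<in> gamma (LMlt mulL) (Suc 1)"
    by (rule commutator_in_gamma_Suc) (simp_all add: x1 x2)
  then have y2: "Phi 0 0 1 0 \<in> gamma (LMlt mulL) 2"
    unfolding LMlt_commutator[OF x2 x1] by (simp add: binom2_def numeral_2_eq_2 del: gamma.simps)
  then have y: "Phi 0 0 1 0 \<in> carrier (LMlt mulL)"
    using gamma2_LMlt by blast
  have "commutator (LMlt mulL) (Phi 1 0 0 0) (Phi 0 0 1 0) \<in> gamma (LMlt mulL) (Suc 2)"
    by (rule commutator_in_gamma_Suc[OF _ x1 y2]) simp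
  then have "Phi 0 0 0 (- 1) \<in> gamma (LMlt mulL) 3"
    unfolding LMlt_commutator[OF x1 y] by (simp add: binom2_def)
  moreover have "Phi 0 0 0 (- 1) \<noteq> \<one>\<^bsub>LMlt mulL\<^esub>"
    by (simp add: LMlt_one Phi_eq_id_iff)
  ultimately show ?thesis by blast
qed

lemma Dk_mulL_center: "2 \<le> k \<Longrightarrow> k \<le> 4 \<Longrightarrow> Dk mulL (0, 0) k = {(0, q) | q. True}"
  using Dk_antimono[of 2 k mulL "(0, 0)"] Dk_antimono[of k 4 mulL "(0, 0)"] Dk2_subset_center center_subset_Dk4
  by blast

lemma tf_nilpotent_class_mulL: "tf_nilpotent_class mulL (0, 0) 4"
proof -
  have "Dk mulL (0, 0) 5 = {(0, 0)}"
    using Dk5_subset_unit powI.zero by (force simp: Dk_def)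
  moreover have "(0, 1) \<in> Dk mulL (0, 0) 4"
    using center_subset_Dk4 by blast
  ultimately show ?thesis
    unfolding tf_nilpotent_class_def by (auto simp: numeral_eq_Suc)
qed

lemma group_nilpotent_class_LMlt: "group_nilpotent_class (LMlt mulL) 3"
  unfolding group_nilpotent_class_def using gamma4_LMlt gamma3_LMlt_nontrivial by simp

lemma mulL_commute: "mulL a b = mulL b a"
  by (simp add: mulL_def algebra_simps)

lemma is_loop_mulL: "is_loop mulL (0, 0)"
proof -
  have "bij (mulL a)" for a
    using Phi_in_Bij unfolding mulL_eq_Phi by (simp add: Bij_def bij_betw_def bij_def)
  moreover have "(\<lambda>x. mulL x a) = mulL a" for a
    by (rule ext) (rule mulL_commute)
  ultimately show ?thesis
    unfolding is_loop_def by (simp add: mulL_def)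
qed

theorem proposition3p3:
  shows "is_loop mulL (0, 0)
    \<and> (\<forall>a b. mulL a b = mulL b a)
    \<and> tf_nilpotent_class mulL (0, 0) 4
    \<and> Dk mulL (0, 0) 2 = {(0, q) | q. True}
    \<and> Dk mulL (0, 0) 3 = {(0, q) | q. True}
    \<and> Dk mulL (0, 0) 4 = {(0, q) | q. True}
    \<and> group_nilpotent_class (LMlt mulL) 3"
  using is_loop_mulL mulL_commute tf_nilpotent_class_mulL Dk_mulL_center group_nilpotent_class_LMlt
  by simp

end
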